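(* For every bunch $\Delta$ and formula $\varphi$: if $[\![\lfloor\Delta\rfloor]\!]\subseteq[\![\varphi]\!]$ holds in the BI algebra $\mathcal C$ (with atoms interpreted by $[\![a]\!]=[\![a]\!]^{\mathrm{out}}$), then $\Delta\vdash_{\mathsf{cf}}\varphi$.
   Context: Formulas of BI: $\varphi,\psi ::= \top \mid \bot \mid \varphi\wedge\psi \mid \varphi\vee\psi \mid \varphi\to\psi \mid \mathsf{emp} \mid \varphi\ast\psi \mid \varphi -\!\!\ast\, \psi \mid a$, $a\in\mathrm{Atom}$. Bunches are finite binary trees whose leaves are formulas or empty bunches $\varnothing_m,\varnothing_a$ and whose internal nodes are labelled by the multiplicative comma ($\Delta_1\mathbin{,}\Delta_2$) or the additive semicolon ($\Delta_1\mathbin{;}\Delta_2$). A bunched context $\Delta(-)$ is a bunch with one leaf replaced by a hole; $\Delta(\Gamma)$ fills it with $\Gamma$. $\lfloor\Delta\rfloor$ is the formula obtained from $\Delta$ by replacing $\mathbin{,}$ by $\ast$, $\varnothing_m$ by $\mathsf{emp}$, $\mathbin{;}$ by $\wedge$, $\varnothing_a$ by $\top$. Bunch equivalence $\equiv$ is the least equivalence relation making $\mathbin{,}$ commutative, associative with unit $\varnothing_m$, $\mathbin{;}$ commutative, associative with unit $\varnothing_a$, and closed under contexts; $\mathrm{Bunch}$ is the set of bunches modulo $\equiv$. The cut-free BI sequent calculus ($\Delta\vdash_{\mathsf{cf}}\varphi$) has the rules: (ax) $a\vdash a$ for atoms $a$; (equiv) from $\Delta'\vdash\varphi$, $\Delta\equiv\Delta'$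 infer $\Delta\vdash\varphi$; (W;) from $\Delta(\Delta_1)\vdash\varphi$ infer $\Delta(\Delta_1\mathbin{;}\Delta_2)\vdash\varphi$; (C;) from $\Delta(\Delta_1\mathbin{;}\Delta_1)\vdash\varphi$ infer $\Delta(\Delta_1)\vdash\varphi$; (empR) $\varnothing_m\vdash\mathsf{emp}$; (empL) from $\Delta(\varnothing_m)\vdash\varphi$ infer $\Delta(\mathsf{emp})\vdash\varphi$; ($\ast$R) from $\Delta_1\vdash\varphi$, $\Delta_2\vdash\psi$ infer $\Delta_1\mathbin{,}\Delta_2\vdash\varphi\ast\psi$; ($\ast$L) from $\Delta(\varphi\mathbin{,}\psi)\vdash\chi$ infer $\Delta(\varphi\ast\psi)\vdash\chi$; ($-\!\ast$R) from $\Delta\mathbin{,}\varphi\vdash\psi$ infer $\Delta\vdash\varphi-\!\!\ast\,\psi$; ($-\!\ast$L) from $\Delta_1\vdash\varphi$, $\Delta(\Delta_2\mathbin{,}\psi)\vdash\chi$ infer $\Delta((\Delta_1\mathbin{,}\Delta_2)\mathbin{,}(\varphi-\!\!\ast\,\psi))\vdash\chi$; ($\top$R) $\varnothing_a\vdash\top$; ($\top$L) from $\Delta(\varnothing_a)\vdash\varphi$ infer $\Delta(\top)\vdash\varphi$; ($\wedge$R) from $\Delta_1\vdash\varphi$, $\Delta_2\vdash\psi$ infer $\Delta_1\mathbin{;}\Delta_2\vdash\varphi\wedge\psi$; ($\wedge$L) from $\Delta(\varphi\mathbin{;}\psi)\vdash\chi$ infer $\Delta(\varphi\wedge\psi)\vdash\chi$;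 ($\to$R) from $\Delta\mathbin{;}\varphi\vdash\psi$ infer $\Delta\vdash\varphi\to\psi$; ($\to$L) from $\Delta_1\vdash\varphi$, $\Delta(\Delta_2\mathbin{;}\psi)\vdash\chi$ infer $\Delta((\Delta_1\mathbin{;}\Delta_2)\mathbin{;}(\varphi\to\psi))\vdash\chi$; ($\bot$L) $\Delta(\bot)\vdash\varphi$; ($\vee$R1/2) from $\Delta\vdash\varphi$ (resp. $\Delta\vdash\psi$) infer $\Delta\vdash\varphi\vee\psi$; ($\vee$L) from $\Delta(\varphi)\vdash\chi$, $\Delta(\psi)\vdash\chi$ infer $\Delta(\varphi\vee\psi)\vdash\chi$. (No cut rule.) For a formula $\varphi$, $[\![\varphi]\!]^{\mathrm{out}}=\{\Delta\in\mathrm{Bunch}\mid\Delta\vdash_{\mathsf{cf}}\varphi\}$. For $X\subseteq\mathrm{Bunch}$, $\mathrm{cl}(X)=\bigcap\{[\![\varphi]\!]^{\mathrm{out}}\mid X\subseteq[\![\varphi]\!]^{\mathrm{out}}\}$, and $\mathcal C=\{X\subseteq\mathrm{Bunch}\mid X=\mathrm{cl}(X)\}$. $\mathcal C$ is a BI algebra with operations: $\mathsf{emp}=\mathrm{cl}(\{\varnothing_m\})$, $\top=\mathrm{Bunch}$, $\bot=\mathrm{cl}(\emptyset)$, $X\vee Y=\mathrm{cl}(X\cup Y)$, $X\wedge Y=X\cap Y$, $X\ast Y=\mathrm{cl}(\{\Delta\mathbin{,}\Delta'\mid\Delta\in X,\Delta'\in Y\})$, $X-\!\!\ast\,Y=\{\Delta\mid\forall\Delta'\in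 X.\ (\Delta\mathbin{,}\Delta')\in Y\}$, $X\to Y=\{\Delta\mid\forall\Delta'\in X.\ (\Delta\mathbin{;}\Delta')\in Y\}$; the order is inclusion. Formulas are interpreted homomorphically in $\mathcal C$ given the interpretation of atoms. *)

theory Defs
  imports Main
begin

datatype 'a fm =
    FTop | FBot | FAnd "'a fm" "'a fm" | FOr "'a fm" "'a fm" | FImp "'a fm" "'a fm"
  | FEmp | FStar "'a fm" "'a fm" | FWand "'a fm" "'a fm" | FAtom 'a

datatype 'a bunch =
    BFm "'a fm"
  | EmpM
  | EmpA
  | Comma "'a bunch" "'a bunch"
  | Semi "'a bunch" "'a bunch"

datatype 'a bctx =
    Hole
  | CommaL "'a bctx" "'a bunch" | CommaR "'a bunch" "'a bctx"
  | SemiL "'a bctx" "'a bunch"  | SemiR "'a bunch" "'a bctx"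

fun fill :: "'a bctx \<Rightarrow> 'a bunch \<Rightarrow> 'a bunch" where
  "fill Hole G = G"
| "fill (CommaL C D) G = Comma (fill C G) D"
| "fill (CommaR D C) G = Comma D (fill C G)"
| "fill (SemiL C D) G = Semi (fill C G) D"
| "fill (SemiR D C) G = Semi D (fill C G)"

fun floor_b :: "'a bunch \<Rightarrow> 'a fm" where
  "floor_b (BFm \<phi>) = \<phi>"
| "floor_b EmpM = FEmp"
| "floor_b EmpA = FTop"
| "floor_b (Comma D1 D2) = FStar (floor_b D1) (floor_b D2)"
| "floor_b (Semi D1 D2) = FAnd (floor_b D1) (floor_b D2)"

inductive beq :: "'a bunch \<Rightarrow> 'a bunch \<Rightarrow> bool" where
  beq_refl: "beq D D"
| beq_sym: "beq D D' \<Longrightarrow> beq D' D"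
| beq_trans: "beq D1 D2 \<Longrightarrow> beq D2 D3 \<Longrightarrow> beq D1 D3"
| comma_comm: "beq (Comma D1 D2) (Comma D2 D1)"
| comma_assoc: "beq (Comma (Comma D1 D2) D3) (Comma D1 (Comma D2 D3))"
| comma_unit: "beq (Comma D EmpM) D"
| semi_comm: "beq (Semi D1 D2) (Semi D2 D1)"
| semi_assoc: "beq (Semi (Semi D1 D2) D3) (Semi D1 (Semi D2 D3))"
| semi_unit: "beq (Semi D EmpA) D"
| beq_ctx: "beq G G' \<Longrightarrow> beq (fill C G) (fill C G')"

inductive cf :: "'a bunch \<Rightarrow> 'a fm \<Rightarrow> bool" where
  ax: "cf (BFm (FAtom a)) (FAtom a)"
| equiv: "cf D' \<phi> \<Longrightarrow> beq D D' \<Longrightarrow> cf D \<phi>"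
| WSemi: "cf (fill C D1) \<phi> \<Longrightarrow> cf (fill C (Semi D1 D2)) \<phi>"
| CSemi: "cf (fill C (Semi D1 D1)) \<phi> \<Longrightarrow> cf (fill C D1) \<phi>"
| empR: "cf EmpM FEmp"
| empL: "cf (fill C EmpM) \<phi> \<Longrightarrow> cf (fill C (BFm FEmp)) \<phi>"
| starR: "cf D1 \<phi> \<Longrightarrow> cf D2 \<psi> \<Longrightarrow> cf (Comma D1 D2) (FStar \<phi> \<psi>)"
| starL: "cf (fill C (Comma (BFm \<phi>) (BFm \<psi>))) \<chi> \<Longrightarrow> cf (fill C (BFm (FStar \<phi> \<psi>))) \<chi>"
| wandR: "cf (Comma D (BFm \<phi>)) \<psi> \<Longrightarrow> cf D (FWand \<phi> \<psi>)"
| wandL: "cf D1 \<phi> \<Longrightarrow> cf (fill C (Comma D2 (BFm \<psi>))) \<chi> \<Longrightarrow>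
           cf (fill C (Comma (Comma D1 D2) (BFm (FWand \<phi> \<psi>)))) \<chi>"
| topR: "cf EmpA FTop"
| topL: "cf (fill C EmpA) \<phi> \<Longrightarrow> cf (fill C (BFm FTop)) \<phi>"
| andR: "cf D1 \<phi> \<Longrightarrow> cf D2 \<psi> \<Longrightarrow> cf (Semi D1 D2) (FAnd \<phi> \<psi>)"
| andL: "cf (fill C (Semi (BFm \<phi>) (BFm \<psi>))) \<chi> \<Longrightarrow> cf (fill C (BFm (FAnd \<phi> \<psi>))) \<chi>"
| impR: "cf (Semi D (BFm \<phi>)) \<psi> \<Longrightarrow> cf D (FImp \<phi> \<psi>)"
| impL: "cf D1 \<phi> \<Longrightarrow> cf (fill C (Semi D2 (BFm \<psi>))) \<chi> \<Longrightarrow>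
           cf (fill C (Semi (Semi D1 D2) (BFm (FImp \<phi> \<psi>)))) \<chi>"
| botL: "cf (fill C (BFm FBot)) \<phi>"
| orR1: "cf D \<phi> \<Longrightarrow> cf D (FOr \<phi> \<psi>)"
| orR2: "cf D \<psi> \<Longrightarrow> cf D (FOr \<phi> \<psi>)"
| orL: "cf (fill C (BFm \<phi>)) \<chi> \<Longrightarrow> cf (fill C (BFm \<psi>)) \<chi> \<Longrightarrow> cf (fill C (BFm (FOr \<phi> \<psi>))) \<chi>"

definition out :: "'a fm \<Rightarrow> 'a bunch set" where
  "out \<phi> = {D. cf D \<phi>}"

definition cl :: "'a bunch set \<Rightarrow> 'a bunch set" where
  "cl X = \<Inter> {out \<phi> | \<phi>. X \<subseteq> out \<phi>}"

definition C_emp :: "'a bunch set" where "C_emp = cl {EmpM}"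
definition C_top :: "'a bunch set" where "C_top = UNIV"
definition C_bot :: "'a bunch set" where "C_bot = cl {}"
definition C_or :: "'a bunch set \<Rightarrow> 'a bunch set \<Rightarrow> 'a bunch set" where
  "C_or X Y = cl (X \<union> Y)"
definition C_and :: "'a bunch set \<Rightarrow> 'a bunch set \<Rightarrow> 'a bunch set" where
  "C_and X Y = X \<inter> Y"
definition C_star :: "'a bunch set \<Rightarrow> 'a bunch set \<Rightarrow> 'a bunch set" where
  "C_star X Y = cl {Comma D D' | D D'. D \<in> X \<and> D' \<in> Y}"
definition C_wand :: "'a bunch set \<Rightarrow> 'a bunch set \<Rightarrow> 'a bunch set" where
  "C_wand X Y = {D. \<forall>D'\<in>X. Comma D D' \<in> Y}"
definition C_imp :: "'a bunch set \<Rightarrow> 'a bunch set \<Rightarrow> 'a bunch set" where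
  "C_imp X Y = {D. \<forall>D'\<in>X. Semi D D' \<in> Y}"

fun interp :: "'a fm \<Rightarrow> 'a bunch set" where
  "interp FTop = C_top"
| "interp FBot = C_bot"
| "interp (FAnd \<phi> \<psi>) = C_and (interp \<phi>) (interp \<psi>)"
| "interp (FOr \<phi> \<psi>) = C_or (interp \<phi>) (interp \<psi>)"
| "interp (FImp \<phi> \<psi>) = C_imp (interp \<phi>) (interp \<psi>)"
| "interp FEmp = C_emp"
| "interp (FStar \<phi> \<psi>) = C_star (interp \<phi>) (interp \<psi>)"
| "interp (FWand \<phi> \<psi>) = C_wand (interp \<phi>) (interp \<psi>)"
| "interp (FAtom a) = out (FAtom a)"

end

theory Submission
  imports Defs
begin

text \<open>Okada's argument: by induction on \<open>\<phi>\<close>, \<open>BFm \<phi> \<in> interp \<phi> \<subseteq> out \<phi>\<close>. For \<open>\<and>\<close>, \<open>\<rightarrow>\<close>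
  and \<open>-*\<close> the membership \<open>BFm \<phi> \<in> interp \<phi>\<close> is obtained from the left rule of the
  connective, so the induction also has to carry that every \<open>interp \<phi>\<close> is closed under those
  rules, weakening and bunch equivalence. Finally every bunch lies in \<open>interp (floor_b \<Delta>)\<close>,
  so the hypothesis gives \<open>\<Delta> \<in> interp \<phi> \<subseteq> out \<phi>\<close>.\<close>

lemma beq_SemiL: "beq D D' \<Longrightarrow> beq (Semi D E) (Semi D' E)"
  using beq_ctx[of D D' "SemiL Hole E"] by simp

lemma beq_CommaL: "beq D D' \<Longrightarrow> beq (Comma D E) (Comma D' E)"
  using beq_ctx[of D D' "CommaL Hole E"] by simp

lemma beq_Semi_EmpA_left: "beq (Semi EmpA D) D"
  by (meson beq_trans semi_comm semi_unit)

lemma beq_Comma_EmpM_left: "beq (Comma EmpM D) D"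
  by (meson beq_trans comma_comm comma_unit)

lemma cl_upper: "X \<subseteq> cl X"
  unfolding cl_def by blast

lemma cl_least: "X \<subseteq> out \<phi> \<Longrightarrow> cl X \<subseteq> out \<phi>"
  unfolding cl_def by blast

lemma mem_cl_iff: "D \<in> cl X \<longleftrightarrow> (\<forall>\<chi>. X \<subseteq> out \<chi> \<longrightarrow> cf D \<chi>)"
  unfolding cl_def out_def by blast

text \<open>Only the left rules of \<open>\<and>\<close>, \<open>\<rightarrow>\<close> and \<open>-*\<close>, together with weakening and bunch
  equivalence, have to be tracked: the other connectives are interpreted by \<open>cl\<close>, whose values
  are intersections of sets \<open>out \<chi>\<close> and so are closed under every rule.\<close>

definition left_rules_closed :: "'a bunch set \<Rightarrow> bool" where
  "left_rules_closed X \<longleftrightarrow>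
     (\<forall>C D1 D2. fill C D1 \<in> X \<longrightarrow> fill C (Semi D1 D2) \<in> X) \<and>
     (\<forall>C \<phi> \<psi>. fill C (Semi (BFm \<phi>) (BFm \<psi>)) \<in> X \<longrightarrow> fill C (BFm (FAnd \<phi> \<psi>)) \<in> X) \<and>
     (\<forall>C D1 D2 \<phi> \<psi>. cf D1 \<phi> \<longrightarrow> fill C (Semi D2 (BFm \<psi>)) \<in> X \<longrightarrow>
        fill C (Semi (Semi D1 D2) (BFm (FImp \<phi> \<psi>))) \<in> X) \<and>
     (\<forall>C D1 D2 \<phi> \<psi>. cf D1 \<phi> \<longrightarrow> fill C (Comma D2 (BFm \<psi>)) \<in> X \<longrightarrow>
        fill C (Comma (Comma D1 D2) (BFm (FWand \<phi> \<psi>))) \<in> X) \<and>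
     (\<forall>D D'. D' \<in> X \<longrightarrow> beq D D' \<longrightarrow> D \<in> X)"

lemma left_rules_closed_weaken:
  "left_rules_closed X \<Longrightarrow> D1 \<in> X \<Longrightarrow> Semi D1 D2 \<in> X"
  unfolding left_rules_closed_def by (metis fill.simps(1))

lemma left_rules_closed_andL:
  "left_rules_closed X \<Longrightarrow> Semi (BFm \<phi>) (BFm \<psi>) \<in> X \<Longrightarrow> BFm (FAnd \<phi> \<psi>) \<in> X"
  unfolding left_rules_closed_def by (metis fill.simps(1))

lemma left_rules_closed_impL:
  "left_rules_closed X \<Longrightarrow> cf D1 \<phi> \<Longrightarrow> Semi D2 (BFm \<psi>) \<in> X \<Longrightarrow>
    Semi (Semi D1 D2) (BFm (FImp \<phi> \<psi>)) \<in> X"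
  unfolding left_rules_closed_def by (metis fill.simps(1))

lemma left_rules_closed_wandL:
  "left_rules_closed X \<Longrightarrow> cf D1 \<phi> \<Longrightarrow> Comma D2 (BFm \<psi>) \<in> X \<Longrightarrow>
    Comma (Comma D1 D2) (BFm (FWand \<phi> \<psi>)) \<in> X"
  unfolding left_rules_closed_def by (metis fill.simps(1))

lemma left_rules_closed_equiv:
  "left_rules_closed X \<Longrightarrow> D' \<in> X \<Longrightarrow> beq D D' \<Longrightarrow> D \<in> X"
  unfolding left_rules_closed_def by blast

lemma left_rules_closed_Semi_commute:
  "left_rules_closed X \<Longrightarrow> Semi D1 D2 \<in> X \<Longrightarrow> Semi D2 D1 \<in> X"
  using left_rules_closed_equiv semi_comm by blast

lemma left_rules_closed_out: "left_rules_closed (out \<chi>)"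
  unfolding left_rules_closed_def out_def by (auto intro: cf.intros)

lemma left_rules_closed_Inter:
  "(\<And>X. X \<in> F \<Longrightarrow> left_rules_closed X) \<Longrightarrow> left_rules_closed (\<Inter>F)"
  unfolding left_rules_closed_def by blast

lemma left_rules_closed_Int:
  "left_rules_closed X \<Longrightarrow> left_rules_closed Y \<Longrightarrow> left_rules_closed (X \<inter> Y)"
  using left_rules_closed_Inter[of "{X, Y}"] by auto

lemma left_rules_closed_UNIV: "left_rules_closed UNIV"
  unfolding left_rules_closed_def by blast

lemma left_rules_closed_cl: "left_rules_closed (cl X)"
  unfolding cl_def by (rule left_rules_closed_Inter) (auto simp: left_rules_closed_out)

text \<open>Membership of \<open>D\<close> in \<open>C_wand X Y\<close> or \<open>C_imp X Y\<close> is membership in \<open>Y\<close> of \<open>D\<close> placed in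
  the context \<open>(-), D'\<close> or \<open>(-); D'\<close>; this is why \<open>left_rules_closed\<close> quantifies over contexts.\<close>

lemma left_rules_closed_C_wand:
  "left_rules_closed Y \<Longrightarrow> left_rules_closed (C_wand X Y)"
  unfolding left_rules_closed_def C_wand_def
  by (simp flip: fill.simps(2)) (meson beq_CommaL)

lemma left_rules_closed_C_imp:
  "left_rules_closed Y \<Longrightarrow> left_rules_closed (C_imp X Y)"
  unfolding left_rules_closed_def C_imp_def
  by (simp flip: fill.simps(4)) (meson beq_SemiL)

lemma left_rules_closed_interp: "left_rules_closed (interp \<phi>)"
  by (induction \<phi>)
    (simp_all add: C_top_def C_bot_def C_and_def C_or_def C_emp_def
      C_star_def left_rules_closed_cl left_rules_closed_Int left_rules_closed_UNIV
      left_rules_closed_out left_rules_closed_C_wand left_rules_closed_C_imp)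

definition adequate :: "'a fm \<Rightarrow> 'a bunch set \<Rightarrow> bool" where
  "adequate \<phi> X \<longleftrightarrow> BFm \<phi> \<in> X \<and> X \<subseteq> out \<phi>"

lemma adequate_out_atom: "adequate (FAtom a) (out (FAtom a))"
  unfolding adequate_def out_def by (simp add: ax)

lemma adequate_C_top: "adequate FTop C_top"
proof -
  have "cf D FTop" for D :: "'a bunch"
  proof -
    have "cf (Semi EmpA D) FTop"
      using WSemi[of Hole EmpA FTop D] by (simp add: topR)
    then show ?thesis
      using equiv beq_sym beq_Semi_EmpA_left by blast
  qed
  then show ?thesis
    unfolding adequate_def C_top_def out_def by auto
qed

lemma adequate_C_bot: "adequate FBot C_bot"
  unfolding adequate_def C_bot_def
proof
  show "BFm FBot \<in> cl {}"
    unfolding mem_cl_iff by (metis botL fill.simps(1))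
  show "cl {} \<subseteq> out FBot"
    by (simp add: cl_least)
qed

lemma adequate_C_emp: "adequate FEmp C_emp"
  unfolding adequate_def C_emp_def
proof
  show "BFm FEmp \<in> cl {EmpM}"
    unfolding mem_cl_iff out_def by (metis empL fill.simps(1) insert_subset mem_Collect_eq)
  show "cl {EmpM} \<subseteq> out FEmp"
    by (rule cl_least) (simp add: out_def empR)
qed

lemma adequate_C_and:
  assumes "left_rules_closed X" "left_rules_closed Y" "adequate \<phi> X" "adequate \<psi> Y"
  shows "adequate (FAnd \<phi> \<psi>) (C_and X Y)"
  unfolding adequate_def C_and_def
proof
  have "Semi (BFm \<phi>) (BFm \<psi>) \<in> X" "Semi (BFm \<phi>) (BFm \<psi>) \<in> Y"
    using assms by (auto simp: adequate_def
        intro: left_rules_closed_weaken left_rules_closed_Semi_commute)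
  then show "BFm (FAnd \<phi> \<psi>) \<in> X \<inter> Y"
    using assms(1,2) left_rules_closed_andL by blast
  show "X \<inter> Y \<subseteq> out (FAnd \<phi> \<psi>)"
  proof
    fix D assume "D \<in> X \<inter> Y"
    then have "cf (Semi D D) (FAnd \<phi> \<psi>)"
      using assms(3,4) by (auto simp: adequate_def out_def intro: andR)
    then show "D \<in> out (FAnd \<phi> \<psi>)"
      using CSemi[of Hole] by (simp add: out_def)
  qed
qed

lemma adequate_C_or:
  assumes "adequate \<phi> X" "adequate \<psi> Y"
  shows "adequate (FOr \<phi> \<psi>) (C_or X Y)"
  unfolding adequate_def C_or_def mem_cl_iff
proof
  show "\<forall>\<chi>. X \<union> Y \<subseteq> out \<chi> \<longrightarrow> cf (BFm (FOr \<phi> \<psi>)) \<chi>"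
  proof (intro allI impI)
    fix \<chi> assume "X \<union> Y \<subseteq> out \<chi>"
    then have "cf (BFm \<phi>) \<chi>" "cf (BFm \<psi>) \<chi>"
      using assms by (auto simp: adequate_def out_def)
    then show "cf (BFm (FOr \<phi> \<psi>)) \<chi>"
      using orL[of Hole] by simp
  qed
  show "cl (X \<union> Y) \<subseteq> out (FOr \<phi> \<psi>)"
    using assms by (intro cl_least) (auto simp: adequate_def out_def intro: orR1 orR2)
qed

lemma adequate_C_star:
  assumes "adequate \<phi> X" "adequate \<psi> Y"
  shows "adequate (FStar \<phi> \<psi>) (C_star X Y)"
  unfolding adequate_def C_star_def mem_cl_iff
proof
  have "Comma (BFm \<phi>) (BFm \<psi>) \<in> {Comma D D' |D D'. D \<in> X \<and> D' \<in> Y}"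
    using assms by (auto simp: adequate_def)
  then show "\<forall>\<chi>. {Comma D D' |D D'. D \<in> X \<and> D' \<in> Y} \<subseteq> out \<chi> \<longrightarrow> cf (BFm (FStar \<phi> \<psi>)) \<chi>"
    using starL[of Hole] by (fastforce simp: out_def)
  show "cl {Comma D D' |D D'. D \<in> X \<and> D' \<in> Y} \<subseteq> out (FStar \<phi> \<psi>)"
    using assms by (intro cl_least) (auto simp: adequate_def out_def intro: starR)
qed

text \<open>The hypothesis \<open>\<phi> \<rightarrow> \<psi>\<close> acts on \<open>D' \<in> X\<close> by \<open>\<rightarrow>\<close>L (and \<open>\<phi> -* \<psi>\<close> by \<open>-*\<close>L), with
  \<open>\<psi>\<close> itself as the right premise padded to \<open>\<varnothing>\<^sub>a; \<psi>\<close> (resp. \<open>\<varnothing>\<^sub>m, \<psi>\<close>).\<close>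

lemma adequate_C_imp:
  assumes "left_rules_closed Y" "adequate \<phi> X" "adequate \<psi> Y"
  shows "adequate (FImp \<phi> \<psi>) (C_imp X Y)"
  unfolding adequate_def C_imp_def
proof
  have "Semi (BFm (FImp \<phi> \<psi>)) D' \<in> Y" if "D' \<in> X" for D'
  proof -
    have "Semi EmpA (BFm \<psi>) \<in> Y"
      using assms(1,3) beq_Semi_EmpA_left left_rules_closed_equiv by (auto simp: adequate_def)
    moreover have "cf D' \<phi>"
      using assms(2) that by (auto simp: adequate_def out_def)
    ultimately have "Semi (Semi D' EmpA) (BFm (FImp \<phi> \<psi>)) \<in> Y"
      using assms(1) left_rules_closed_impL by blast
    moreover have "beq (Semi (BFm (FImp \<phi> \<psi>)) D') (Semi (Semi D' EmpA) (BFm (FImp \<phi> \<psi>)))"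
      by (meson beq_SemiL beq_sym beq_trans semi_comm semi_unit)
    ultimately show ?thesis
      using assms(1) left_rules_closed_equiv by blast
  qed
  then show "BFm (FImp \<phi> \<psi>) \<in> {D. \<forall>D'\<in>X. Semi D D' \<in> Y}"
    by blast
  show "{D. \<forall>D'\<in>X. Semi D D' \<in> Y} \<subseteq> out (FImp \<phi> \<psi>)"
    using assms(2,3) by (auto simp: adequate_def out_def intro: impR)
qed

lemma adequate_C_wand:
  assumes "left_rules_closed Y" "adequate \<phi> X" "adequate \<psi> Y"
  shows "adequate (FWand \<phi> \<psi>) (C_wand X Y)"
  unfolding adequate_def C_wand_def
proof
  have "Comma (BFm (FWand \<phi> \<psi>)) D' \<in> Y" if "D' \<in> X" for D'
  proof -
    have "Comma EmpM (BFm \<psi>) \<in> Y"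
      using assms(1,3) beq_Comma_EmpM_left left_rules_closed_equiv by (auto simp: adequate_def)
    moreover have "cf D' \<phi>"
      using assms(2) that by (auto simp: adequate_def out_def)
    ultimately have "Comma (Comma D' EmpM) (BFm (FWand \<phi> \<psi>)) \<in> Y"
      using assms(1) left_rules_closed_wandL by blast
    moreover have "beq (Comma (BFm (FWand \<phi> \<psi>)) D') (Comma (Comma D' EmpM) (BFm (FWand \<phi> \<psi>)))"
      by (meson beq_CommaL beq_sym beq_trans comma_comm comma_unit)
    ultimately show ?thesis
      using assms(1) left_rules_closed_equiv by blast
  qed
  then show "BFm (FWand \<phi> \<psi>) \<in> {D. \<forall>D'\<in>X. Comma D D' \<in> Y}"
    by blast
  show "{D. \<forall>D'\<in>X. Comma D D' \<in> Y} \<subseteq> out (FWand \<phi> \<psi>)"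
    using assms(2,3) by (auto simp: adequate_def out_def intro: wandR)
qed

lemma adequate_interp: "adequate \<phi> (interp \<phi>)"
  by (induction \<phi>)
    (simp_all add: left_rules_closed_interp adequate_out_atom adequate_C_top adequate_C_bot
      adequate_C_emp adequate_C_and adequate_C_or adequate_C_star adequate_C_imp adequate_C_wand)

lemma mem_interp_floor_b: "\<Delta> \<in> interp (floor_b \<Delta>)"
proof (induction \<Delta>)
  case (BFm \<phi>)
  then show ?case
    using adequate_interp[of \<phi>] by (simp add: adequate_def)
next
  case EmpM
  show ?case
    using cl_upper by (auto simp: C_emp_def)
next
  case EmpA
  show ?case
    by (simp add: C_top_def)
next
  case (Comma D1 D2)
  then show ?case
    using cl_upper by (fastforce simp: C_star_def)
next
  case (Semi D1 D2)
  then show ?case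
    using left_rules_closed_interp
    by (auto simp: C_and_def intro: left_rules_closed_weaken left_rules_closed_Semi_commute)
qed

theorem theorem6p7:
  fixes \<Delta> :: "'a bunch" and \<phi> :: "'a fm"
  assumes "interp (floor_b \<Delta>) \<subseteq> interp \<phi>"
  shows "cf \<Delta> \<phi>"
proof -
  have "\<Delta> \<in> interp \<phi>"
    using mem_interp_floor_b assms by blast
  then show ?thesis
    using adequate_interp[of \<phi>] by (auto simp: adequate_def out_def)
qed

end
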